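(* Let $\delta\in(0,1/2)$, $\beta\in(0,1]$, and let $\mu\ge 0$, $\nu\ge 1$ be constants. Let $\mathcal A$ be an online bin packing algorithm such that on every input list $J$: (i) all bins in its packing that contain only small items, except at most $\mu$ of them, have total size at least $1-\delta$; and (ii) the number of bins in its packing containing at least one large item is at most $\nu|J_\ell|$ (where $J_\ell$ is the set of large items of $J$). Let $I$ be a list of $n$ items drawn independently from a common distribution on $(0,1]$ and let $J$ be the prefix of $I$ of length $\beta n$. Then, with probability tending to $1$ as $\mathbb E[\mathrm{Opt}(I)]\to\infty$, $$\mathcal A(J)\le \frac{2\beta\nu}{\delta(1-\delta)}\,\mathbb E[\mathrm{Opt}(I)]+o\big(\mathbb E[\mathrm{Opt}(I)]\big).$$
   Context: $\mathrm{Opt}(L)$ is the minimum number of unit-capacity bins needed to pack list $L$ and $\mathcal A(L)$ the number of bins used by $\mathcal A$. An item is large if its size is at least $\delta$ and small otherwise. *)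

theory Defs
  imports "HOL-Probability.Probability"
begin

text \<open>A deterministic online bin packing algorithm is modelled as a function
  that, given the prefix of the input seen so far (ending with the current item),
  returns the label of the bin into which the current (last) item is placed.
  Hence the placement of item i depends only on items 0..i.\<close>

type_synonym online_alg = "real list \<Rightarrow> nat"

definition bin_of :: "online_alg \<Rightarrow> real list \<Rightarrow> nat \<Rightarrow> nat" where
  "bin_of A L i = A (take (Suc i) L)"

definition bin_items :: "online_alg \<Rightarrow> real list \<Rightarrow> nat \<Rightarrow> nat set" where
  "bin_items A L b = {i. i < length L \<and> bin_of A L i = b}"

definition bin_load :: "online_alg \<Rightarrow> real list \<Rightarrow> nat \<Rightarrow> real" where
  "bin_load A L b = (\<Sum>i\<in>bin_items A L b. L ! i)"

definition used_bins :: "online_alg \<Rightarrow> real list \<Rightarrow> nat set" where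
  "used_bins A L = {bin_of A L i | i. i < length L}"

definition num_bins :: "online_alg \<Rightarrow> real list \<Rightarrow> nat" where
  "num_bins A L = card (used_bins A L)"

definition valid_input :: "real list \<Rightarrow> bool" where
  "valid_input L \<longleftrightarrow> set L \<subseteq> {0<..1}"

definition valid_online_alg :: "online_alg \<Rightarrow> bool" where
  "valid_online_alg A \<longleftrightarrow> (\<forall>L. valid_input L \<longrightarrow> (\<forall>b. bin_load A L b \<le> 1))"

definition is_large :: "real \<Rightarrow> real \<Rightarrow> bool" where
  "is_large \<delta> x \<longleftrightarrow> \<delta> \<le> x"

definition small_only_bins :: "real \<Rightarrow> online_alg \<Rightarrow> real list \<Rightarrow> nat set" where
  "small_only_bins \<delta> A L =
     {b \<in> used_bins A L. \<forall>i\<in>bin_items A L b. \<not> is_large \<delta> (L ! i)}"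

definition large_bins :: "real \<Rightarrow> online_alg \<Rightarrow> real list \<Rightarrow> nat set" where
  "large_bins \<delta> A L =
     {b \<in> used_bins A L. \<exists>i\<in>bin_items A L b. is_large \<delta> (L ! i)}"

definition num_large :: "real \<Rightarrow> real list \<Rightarrow> nat" where
  "num_large \<delta> L = length (filter (is_large \<delta>) L)"

definition feasible_packing :: "real list \<Rightarrow> nat \<Rightarrow> (nat \<Rightarrow> nat) \<Rightarrow> bool" where
  "feasible_packing L k f \<longleftrightarrow>
     (\<forall>i<length L. f i < k) \<and> (\<forall>b<k. (\<Sum>i | i < length L \<and> f i = b. L ! i) \<le> 1)"

definition Opt :: "real list \<Rightarrow> nat" where
  "Opt L = (LEAST k. \<exists>f. feasible_packing L k f)"

end

theory Submission
  imports Defs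
begin

text \<open>Weight an item of size x by x/(1-\<delta>), plus \<nu> if it is large. By (i), all but \<mu> of the bins
  holding only small items are filled to at least 1-\<delta>, and by (ii) there are at most \<nu> bins with a
  large item per large item, so \<A>(L) is at most \<mu> plus the total weight of L. Since Opt(L) bounds both
  the total size of L and \<delta> times its number of large items, the total weight of L is at most
  \<nu>/(\<delta>(1-\<delta>)) Opt(L); hence the expected weight of the prefix J is at most \<beta>\<nu>/(\<delta>(1-\<delta>)) E[Opt(I)]. The weight of J is a sum of independent,
  identically distributed, bounded nonnegative variables, so its variance is at most a constant times
  its mean, i.e. O(E[Opt(I)]), and by Chebyshev's inequality it exceeds its mean by \<epsilon> E[Opt(I)] with
  probability O(1/(\<epsilon>^2 E[Opt(I)])).\<close>

lemma sum_list_le_Opt: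
  assumes "valid_input L"
  shows "sum_list L \<le> real (Opt L)"
proof -
  have item: "0 < L ! i \<and> L ! i \<le> 1" if "i < length L" for i
    using assms that unfolding valid_input_def by (auto dest!: nth_mem)
  have "feasible_packing L (length L) (\<lambda>i. i)"
    unfolding feasible_packing_def
  proof (intro conjI allI impI)
    fix b assume b: "b < length L"
    then have "{i. i < length L \<and> i = b} = {b}" by auto
    then show "(\<Sum>i | i < length L \<and> i = b. L ! i) \<le> 1" using item b by simp
  qed auto
  then have "\<exists>f. feasible_packing L (Opt L) f"
    unfolding Opt_def using LeastI_ex[of "\<lambda>k. \<exists>f. feasible_packing L k f"] by blast
  then obtain f where f: "feasible_packing L (Opt L) f" ..
  have "sum_list L = (\<Sum>i\<in>{..<length L}. L ! i)"
    by (simp add: sum_list_sum_nth atLeast0LessThan)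
  also have "\<dots> = (\<Sum>b\<in>{..<Opt L}. \<Sum>i | i \<in> {..<length L} \<and> f i = b. L ! i)"
    by (rule sum.group[symmetric]) (use f in \<open>auto simp: feasible_packing_def\<close>)
  also have "\<dots> \<le> (\<Sum>b\<in>{..<Opt L}. 1)"
    by (intro sum_mono) (use f in \<open>auto simp: feasible_packing_def\<close>)
  finally show ?thesis by simp
qed

lemma mult_num_large_le_sum_list:
  "valid_input L \<Longrightarrow> \<delta> * real (num_large \<delta> L) \<le> sum_list L"
proof (induction L)
  case (Cons x L)
  then have "valid_input L" "0 < x" by (auto simp: valid_input_def)
  with Cons show ?case by (auto simp: num_large_def is_large_def algebra_simps)
qed (simp add: num_large_def)

definition item_weight :: "real \<Rightarrow> real \<Rightarrow> real \<Rightarrow> real" where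
  "item_weight \<delta> \<nu> x =
     (if x \<in> {0<..1} then x / (1 - \<delta>) + (if is_large \<delta> x then \<nu> else 0) else 0)"

lemma item_weight_measurable [measurable]: "item_weight \<delta> \<nu> \<in> borel_measurable borel"
  unfolding item_weight_def is_large_def by measurable

lemma item_weight_nonneg: "\<delta> < 1 \<Longrightarrow> 0 \<le> \<nu> \<Longrightarrow> 0 \<le> item_weight \<delta> \<nu> x"
  by (simp add: item_weight_def)

lemma item_weight_le:
  assumes "\<delta> < 1" "0 \<le> \<nu>"
  shows "item_weight \<delta> \<nu> x \<le> 1 / (1 - \<delta>) + \<nu>"
proof -
  have "x \<le> 1 \<Longrightarrow> x / (1 - \<delta>) \<le> 1 / (1 - \<delta>)"
    using assms by (simp add: divide_right_mono)
  then show ?thesis using assms by (auto simp: item_weight_def)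
qed

lemma sum_list_item_weight:
  "valid_input L \<Longrightarrow>
     sum_list (map (item_weight \<delta> \<nu>) L) = sum_list L / (1 - \<delta>) + \<nu> * real (num_large \<delta> L)"
proof (induction L)
  case (Cons x L)
  then have "valid_input L" "x \<in> {0<..1}" by (auto simp: valid_input_def)
  with Cons show ?case
    by (auto simp: num_large_def item_weight_def add_divide_distrib algebra_simps)
qed (simp add: num_large_def)

lemma sum_list_item_weight_le_Opt:
  assumes "valid_input L" "0 < \<delta>" "\<delta> < 1" "1 \<le> \<nu>"
  shows "sum_list (map (item_weight \<delta> \<nu>) L) \<le> \<nu> / (\<delta> * (1 - \<delta>)) * real (Opt L)"
proof -
  have size: "sum_list L \<le> real (Opt L)" by (rule sum_list_le_Opt[OF assms(1)])
  then have "\<delta> * real (num_large \<delta> L) \<le> real (Opt L)"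
    using mult_num_large_le_sum_list[OF assms(1), of \<delta>] by linarith
  then have large: "real (num_large \<delta> L) \<le> real (Opt L) / \<delta>"
    using assms by (simp add: field_simps)
  have "sum_list L / (1 - \<delta>) + \<nu> * real (num_large \<delta> L)
      \<le> real (Opt L) / (1 - \<delta>) + \<nu> * (real (Opt L) / \<delta>)"
    using size large assms by (intro add_mono divide_right_mono mult_left_mono) auto
  also have "\<dots> = real (Opt L) * (\<delta> + \<nu> * (1 - \<delta>)) / (\<delta> * (1 - \<delta>))"
    using assms by (simp add: field_simps)
  also have "\<dots> \<le> real (Opt L) * \<nu> / (\<delta> * (1 - \<delta>))"
    using assms by (intro divide_right_mono mult_left_mono) (auto simp: algebra_simps)
  also have "\<dots> = \<nu> / (\<delta> * (1 - \<delta>)) * real (Opt L)"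
    by simp
  finally show ?thesis by (simp only: sum_list_item_weight[OF assms(1)])
qed

lemma sum_bin_load_used_bins: "(\<Sum>b\<in>used_bins A L. bin_load A L b) = sum_list L"
proof -
  have "(\<Sum>b\<in>used_bins A L. \<Sum>i | i \<in> {..<length L} \<and> bin_of A L i = b. L ! i)
      = (\<Sum>i\<in>{..<length L}. L ! i)"
    by (rule sum.group) (auto simp: used_bins_def)
  then show ?thesis
    by (simp add: bin_load_def bin_items_def sum_list_sum_nth atLeast0LessThan)
qed

lemma bin_load_nonneg: "valid_input L \<Longrightarrow> 0 \<le> bin_load A L b"
  unfolding bin_load_def bin_items_def valid_input_def
  by (intro sum_nonneg) (auto dest!: nth_mem intro: less_imp_le)

lemma card_full_bins_le_sum_list:
  assumes "valid_input L" "\<delta> < 1"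
  shows "real (card {b \<in> small_only_bins \<delta> A L. 1 - \<delta> \<le> bin_load A L b}) \<le> sum_list L / (1 - \<delta>)"
proof -
  let ?F = "{b \<in> small_only_bins \<delta> A L. 1 - \<delta> \<le> bin_load A L b}"
  have "real (card ?F) * (1 - \<delta>) = (\<Sum>b\<in>?F. 1 - \<delta>)" by simp
  also have "\<dots> \<le> (\<Sum>b\<in>?F. bin_load A L b)" by (intro sum_mono) auto
  also have "\<dots> \<le> (\<Sum>b\<in>used_bins A L. bin_load A L b)"
    using bin_load_nonneg[OF assms(1)]
    by (intro sum_mono2) (auto simp: small_only_bins_def used_bins_def)
  finally have "real (card ?F) * (1 - \<delta>) \<le> sum_list L"
    by (simp only: sum_bin_load_used_bins)
  then show ?thesis
    using assms(2) by (simp add: pos_le_divide_eq)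
qed

lemma num_bins_le_sum_item_weight:
  assumes "valid_input L" "\<delta> < 1"
    and "real (card {b \<in> small_only_bins \<delta> A L. bin_load A L b < 1 - \<delta>}) \<le> \<mu>"
    and "real (card (large_bins \<delta> A L)) \<le> \<nu> * real (num_large \<delta> L)"
  shows "real (num_bins A L) \<le> \<mu> + sum_list (map (item_weight \<delta> \<nu>) L)"
proof -
  let ?S = "{b \<in> small_only_bins \<delta> A L. bin_load A L b < 1 - \<delta>}"
  let ?F = "{b \<in> small_only_bins \<delta> A L. 1 - \<delta> \<le> bin_load A L b}"
  have "used_bins A L = ?S \<union> ?F \<union> large_bins \<delta> A L"
    unfolding small_only_bins_def large_bins_def by auto
  then have "num_bins A L \<le> card (?S \<union> ?F) + card (large_bins \<delta> A L)"
    unfolding num_bins_def by (simp add: card_Un_le)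
  also have "\<dots> \<le> card ?S + card ?F + card (large_bins \<delta> A L)"
    by (simp add: card_Un_le)
  finally have "real (num_bins A L) \<le> real (card ?S) + real (card ?F) + real (card (large_bins \<delta> A L))"
    by linarith
  then show ?thesis
    using assms card_full_bins_le_sum_list[OF assms(1,2), of A] sum_list_item_weight[OF assms(1), of \<delta> \<nu>]
    by linarith
qed

lemma integral_PiM_component:
  fixes f :: "'a \<Rightarrow> real"
  assumes "prob_space M" "finite I" "i \<in> I" "integrable M f"
  shows "(\<integral>\<omega>. f (\<omega> i) \<partial>PiM I (\<lambda>_. M)) = integral\<^sup>L M f"
proof -
  interpret prob_space M by fact
  interpret product_sigma_finite "\<lambda>_. M" by unfold_locales
  define F where "F l = (if l = i then f else (\<lambda>_. 1))" for l
  have "(\<integral>\<omega>. (\<Prod>l\<in>I. F l (\<omega> l)) \<partial>PiM I (\<lambda>_. M)) = (\<Prod>l\<in>I. integral\<^sup>L M (F l))"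
    by (rule product_integral_prod) (use assms in \<open>auto simp: F_def\<close>)
  moreover have "(\<Prod>l\<in>I. H l) = H i" if "\<forall>l\<in>I - {i}. H l = 1" for H :: "'b \<Rightarrow> real"
    using assms that by (simp add: prod.remove)
  ultimately show ?thesis by (simp add: F_def prob_space)
qed

lemma integral_PiM_two_components:
  fixes f g :: "'a \<Rightarrow> real"
  assumes "prob_space M" "finite I" "i \<in> I" "j \<in> I" "i \<noteq> j" "integrable M f" "integrable M g"
  shows "(\<integral>\<omega>. f (\<omega> i) * g (\<omega> j) \<partial>PiM I (\<lambda>_. M)) = integral\<^sup>L M f * integral\<^sup>L M g"
proof -
  interpret prob_space M by fact
  interpret product_sigma_finite "\<lambda>_. M" by unfold_locales
  define F where "F l = (if l = i then f else if l = j then g else (\<lambda>_. 1))" for l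
  have "(\<integral>\<omega>. (\<Prod>l\<in>I. F l (\<omega> l)) \<partial>PiM I (\<lambda>_. M)) = (\<Prod>l\<in>I. integral\<^sup>L M (F l))"
    by (rule product_integral_prod) (use assms in \<open>auto simp: F_def\<close>)
  moreover have "(\<Prod>l\<in>I. H l) = H i * H j" if "\<forall>l\<in>I - {i, j}. H l = 1" for H :: "'b \<Rightarrow> real"
  proof -
    have "(\<Prod>l\<in>I. H l) = (\<Prod>l\<in>{i, j}. H l)"
      by (rule prod.mono_neutral_right) (use assms that in auto)
    then show ?thesis using assms by simp
  qed
  ultimately show ?thesis using assms by (simp add: F_def prob_space)
qed

lemma (in prob_space) variance_le_bound_mult_expectation:
  fixes g :: "'a \<Rightarrow> real"
  assumes [measurable]: "g \<in> borel_measurable M" and "\<And>x. 0 \<le> g x" "\<And>x. g x \<le> B"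
  shows "variance g \<le> B * expectation g"
proof -
  have int: "integrable M g" "integrable M (\<lambda>x. (g x)\<^sup>2)"
    by (rule integrable_const_bound[where B=B]; use assms in auto)
       (rule integrable_const_bound[where B="B\<^sup>2"]; use assms in \<open>auto intro!: power_mono\<close>)
  have "variance g \<le> expectation (\<lambda>x. (g x)\<^sup>2)"
    by (simp add: variance_eq int)
  also have "\<dots> \<le> expectation (\<lambda>x. B * g x)"
    using int assms by (intro integral_mono) (auto simp: power2_eq_square intro!: mult_right_mono)
  finally show ?thesis by simp
qed

lemma integral_square_sum_PiM_components_mean_zero:
  fixes h :: "'a \<Rightarrow> real"
  assumes M: "prob_space M" and h_measurable [measurable]: "h \<in> borel_measurable M"
    and h_bound: "\<And>x. \<bar>h x\<bar> \<le> C" and h_mean: "integral\<^sup>L M h = 0" and "m \<le> n"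
  shows "(\<integral>\<omega>. (\<Sum>i<m. h (\<omega> i))\<^sup>2 \<partial>PiM {..<n} (\<lambda>_. M)) = real m * (\<integral>x. (h x)\<^sup>2 \<partial>M)"
proof -
  interpret prob_space M by fact
  define Q where "Q = PiM {..<n} (\<lambda>_. M)"
  interpret Q: prob_space Q unfolding Q_def by (rule prob_space_PiM) (rule M)
  have C_nonneg: "0 \<le> C"
    using h_bound[of undefined] by linarith
  have h_sq_bound: "\<bar>h x * h x\<bar> \<le> C * C" for x
    unfolding abs_mult using h_bound[of x] by (intro mult_mono) auto
  have h_int: "integrable M h" "integrable M (\<lambda>x. h x * h x)"
    using h_bound h_sq_bound
    by (intro integrable_const_bound[where B=C] integrable_const_bound[where B="C * C"]; auto)+
  have pair_int: "integrable Q (\<lambda>\<omega>. h (\<omega> i) * h (\<omega> j))" if "i < n" "j < n" for i j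
  proof (rule Q.integrable_const_bound[where B="C * C"])
    show "AE \<omega> in Q. norm (h (\<omega> i) * h (\<omega> j)) \<le> C * C"
      unfolding real_norm_def abs_mult using h_bound C_nonneg by (intro AE_I2 mult_mono) auto
    show "(\<lambda>\<omega>. h (\<omega> i) * h (\<omega> j)) \<in> borel_measurable Q"
      unfolding Q_def using that h_measurable
      by (intro borel_measurable_times measurable_compose[OF measurable_component_singleton]) auto
  qed
  have pair_integral: "(\<integral>\<omega>. h (\<omega> i) * h (\<omega> j) \<partial>Q) = (if i = j then \<integral>x. h x * h x \<partial>M else 0)"
    if "i < n" "j < n" for i j
    using that integral_PiM_component[OF M _ _ h_int(2), of "{..<n}" i]
      integral_PiM_two_components[OF M _ _ _ _ h_int(1) h_int(1), of "{..<n}" i j] h_mean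
    by (auto simp: Q_def)
  have "(\<integral>\<omega>. (\<Sum>i<m. h (\<omega> i))\<^sup>2 \<partial>Q) = (\<integral>\<omega>. (\<Sum>i<m. \<Sum>j<m. h (\<omega> i) * h (\<omega> j)) \<partial>Q)"
    by (simp add: power2_eq_square sum_product)
  also have "\<dots> = (\<Sum>i<m. \<Sum>j<m. \<integral>\<omega>. h (\<omega> i) * h (\<omega> j) \<partial>Q)"
    using \<open>m \<le> n\<close>
    by (subst Bochner_Integration.integral_sum)
       (auto intro!: sum.cong Bochner_Integration.integral_sum Bochner_Integration.integrable_sum pair_int)
  also have "\<dots> = real m * (\<integral>x. h x * h x \<partial>M)"
    using pair_integral \<open>m \<le> n\<close> by simp
  finally show ?thesis by (simp add: Q_def power2_eq_square)
qed

lemma central_moment_sum_PiM_components: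
  fixes g :: "'a \<Rightarrow> real"
  assumes M: "prob_space M" and [measurable]: "g \<in> borel_measurable M"
    and bound: "\<And>x. \<bar>g x\<bar> \<le> B" and "m \<le> n"
  defines "a \<equiv> \<integral>x. g x \<partial>M"
  shows "(\<integral>\<omega>. ((\<Sum>i<m. g (\<omega> i)) - real m * a)\<^sup>2 \<partial>PiM {..<n} (\<lambda>_. M))
           = real m * (\<integral>x. (g x - a)\<^sup>2 \<partial>M)"
proof -
  interpret prob_space M by fact
  have g_int: "integrable M g"
    by (rule integrable_const_bound[where B=B]) (use bound in auto)
  have "\<bar>a\<bar> \<le> (\<integral>x. \<bar>g x\<bar> \<partial>M)"
    unfolding a_def by (rule integral_abs_bound)
  also have "\<dots> \<le> B"
    using g_int bound by (intro integral_le_const) auto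
  finally have centered_bound: "\<bar>g x - a\<bar> \<le> 2 * B" for x
    using bound[of x] by linarith
  have centered_mean: "(\<integral>x. g x - a \<partial>M) = 0"
    unfolding a_def using g_int by (simp add: prob_space)
  have "(\<Sum>i<m. g (\<omega> i)) - real m * a = (\<Sum>i<m. g (\<omega> i) - a)" for \<omega>
    by (simp add: sum_subtractf)
  then show ?thesis
    using integral_square_sum_PiM_components_mean_zero[OF M _ centered_bound centered_mean \<open>m \<le> n\<close>]
    by simp
qed

lemma prob_PiM_sum_components_deviation:
  fixes g :: "'a \<Rightarrow> real"
  assumes M: "prob_space M" and g_measurable [measurable]: "g \<in> borel_measurable M"
    and "\<And>x. 0 \<le> g x" "\<And>x. g x \<le> B" "m \<le> n" "0 < s"
  defines "a \<equiv> \<integral>x. g x \<partial>M"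
  shows "measure (PiM {..<n} (\<lambda>_. M))
           {\<omega> \<in> space (PiM {..<n} (\<lambda>_. M)). s \<le> \<bar>(\<Sum>i<m. g (\<omega> i)) - real m * a\<bar>}
         \<le> real m * B * a / s\<^sup>2"
proof -
  interpret prob_space M by fact
  define Q where "Q = PiM {..<n} (\<lambda>_. M)"
  interpret Q: prob_space Q unfolding Q_def by (rule prob_space_PiM) (rule M)
  define X where "X \<omega> = (\<Sum>i<m. g (\<omega> i))" for \<omega>
  have bound: "\<bar>g x\<bar> \<le> B" for x
    using assms by (simp add: abs_le_iff)
  have g_int: "integrable M g"
    by (rule integrable_const_bound[where B=B]) (use bound in auto)
  have component_int: "integrable Q (\<lambda>\<omega>. g (\<omega> i))" if "i < n" for i
  proof (rule Q.integrable_const_bound[where B=B])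
    show "(\<lambda>\<omega>. g (\<omega> i)) \<in> borel_measurable Q"
      unfolding Q_def using that g_measurable
      by (intro measurable_compose[OF measurable_component_singleton]) auto
  qed (use bound in auto)
  have X_measurable [measurable]: "X \<in> borel_measurable Q"
    unfolding X_def using \<open>m \<le> n\<close> component_int by (intro borel_measurable_sum) auto
  have X_bound: "\<bar>X \<omega>\<bar> \<le> real m * B" for \<omega>
    unfolding X_def using assms sum_bounded_above[of "{..<m}" "\<lambda>i. g (\<omega> i)" B]
    by (simp add: sum_nonneg)
  have "norm ((X \<omega>)\<^sup>2) \<le> (real m * B)\<^sup>2" for \<omega>
    using power_mono[OF X_bound[of \<omega>] abs_ge_zero, of 2] by simp
  then have X_sq_int: "integrable Q (\<lambda>\<omega>. (X \<omega>)\<^sup>2)"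
    by (intro Q.integrable_const_bound[where B="(real m * B)\<^sup>2"] AE_I2) auto
  have X_mean: "Q.expectation X = real m * a"
  proof -
    have "Q.expectation X = (\<Sum>i<m. \<integral>\<omega>. g (\<omega> i) \<partial>Q)"
      unfolding X_def using component_int \<open>m \<le> n\<close> by (intro Bochner_Integration.integral_sum) auto
    also have "\<dots> = (\<Sum>i<m. a)"
      unfolding Q_def a_def using \<open>m \<le> n\<close> g_int by (intro sum.cong integral_PiM_component[OF M]) auto
    finally show ?thesis by simp
  qed
  have "Q.variance X = real m * variance g"
    unfolding X_mean unfolding X_def Q_def a_def
    by (rule central_moment_sum_PiM_components[OF M _ bound \<open>m \<le> n\<close>]) simp
  also have "\<dots> \<le> real m * B * a"
    unfolding a_def mult.assoc using assms by (intro mult_left_mono variance_le_bound_mult_expectation) auto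
  finally have "Q.variance X / s\<^sup>2 \<le> real m * B * a / s\<^sup>2"
    by (simp add: divide_right_mono)
  with Q.Chebyshev_inequality[OF X_measurable X_sq_int \<open>0 < s\<close>] show ?thesis
    unfolding X_mean by (simp add: Q_def X_def)
qed

lemma AE_PiM_components_in_unit_interval:
  fixes M :: "real measure"
  assumes "prob_space M" "sets M = sets borel" "measure M {0<..1} = 1" "finite I"
  shows "AE \<omega> in PiM I (\<lambda>_. M). \<forall>i\<in>I. \<omega> i \<in> {0<..1}"
proof -
  interpret prob_space M by fact
  have "AE x in M. x \<in> {0<..1}"
    using assms AE_in_set_eq_1[of "{0<..1}"] by simp
  then have "AE \<omega> in PiM I (\<lambda>_. M). \<omega> i \<in> {0<..1}" if "i \<in> I" for i
    using AE_PiM_component[of I "\<lambda>_. M" i "\<lambda>x. x \<in> {0<..1}"] that assms by simp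
  then show ?thesis
    using \<open>finite I\<close> by (simp add: AE_finite_all)
qed

lemma expected_weight_le_expected_Opt:
  fixes M :: "real measure"
  assumes M: "prob_space M" and sets_M: "sets M = sets borel" and "measure M {0<..1} = 1"
    and "0 < \<delta>" "\<delta> < 1" "1 \<le> \<nu>"
    and Opt_int: "integrable (PiM {..<n} (\<lambda>_. M)) (\<lambda>\<omega>. real (Opt (map \<omega> [0..<n])))"
  shows "real n * (\<integral>x. item_weight \<delta> \<nu> x \<partial>M)
           \<le> \<nu> / (\<delta> * (1 - \<delta>)) * (\<integral>\<omega>. real (Opt (map \<omega> [0..<n])) \<partial>PiM {..<n} (\<lambda>_. M))"
proof -
  interpret prob_space M by fact
  define Q where "Q = PiM {..<n} (\<lambda>_. M)"
  interpret Q: prob_space Q unfolding Q_def by (rule prob_space_PiM) (rule M)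
  let ?g = "item_weight \<delta> \<nu>"
  have g_measurable [measurable]: "?g \<in> borel_measurable M"
    using item_weight_measurable measurable_cong_sets[OF sets_M refl] by blast
  have g_bound: "\<bar>?g x\<bar> \<le> 1 / (1 - \<delta>) + \<nu>" for x
    using assms item_weight_nonneg item_weight_le by (simp add: abs_le_iff)
  have g_int: "integrable M ?g"
    by (rule integrable_const_bound[where B="1 / (1 - \<delta>) + \<nu>"]) (use g_bound in auto)
  have component_int: "integrable Q (\<lambda>\<omega>. ?g (\<omega> i))" if "i < n" for i
  proof (rule Q.integrable_const_bound[where B="1 / (1 - \<delta>) + \<nu>"])
    show "(\<lambda>\<omega>. ?g (\<omega> i)) \<in> borel_measurable Q"
      unfolding Q_def using that g_measurable
      by (intro measurable_compose[OF measurable_component_singleton]) auto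
  qed (use g_bound in auto)
  have "real n * (\<integral>x. ?g x \<partial>M) = (\<integral>\<omega>. (\<Sum>i<n. ?g (\<omega> i)) \<partial>Q)"
    using component_int g_int unfolding Q_def
    by (simp add: Bochner_Integration.integral_sum integral_PiM_component[OF M])
  also have "\<dots> \<le> (\<integral>\<omega>. \<nu> / (\<delta> * (1 - \<delta>)) * real (Opt (map \<omega> [0..<n])) \<partial>Q)"
  proof (rule integral_mono_AE)
    show "AE \<omega> in Q. (\<Sum>i<n. ?g (\<omega> i)) \<le> \<nu> / (\<delta> * (1 - \<delta>)) * real (Opt (map \<omega> [0..<n]))"
      using AE_PiM_components_in_unit_interval[OF assms(1-3) finite_lessThan] unfolding Q_def
    proof (rule eventually_mono)
      fix \<omega> :: "nat \<Rightarrow> real" assume "\<forall>i\<in>{..<n}. \<omega> i \<in> {0<..1}"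
      then have "valid_input (map \<omega> [0..<n])" by (auto simp: valid_input_def)
      from sum_list_item_weight_le_Opt[OF this assms(4-6)]
      show "(\<Sum>i<n. ?g (\<omega> i)) \<le> \<nu> / (\<delta> * (1 - \<delta>)) * real (Opt (map \<omega> [0..<n]))"
        by (simp add: sum_list_sum_nth atLeast0LessThan)
    qed
  qed (use component_int Opt_int in \<open>auto simp: Q_def\<close>)
  finally show ?thesis by (simp add: Q_def)
qed

lemma sum_components_less_with_high_prob:
  fixes M :: "real measure" and g :: "real \<Rightarrow> real"
  assumes M: "prob_space M" and sets_M: "sets M = sets borel" and "measure M {0<..1} = 1"
    and g_measurable: "g \<in> borel_measurable borel" and "\<And>x. 0 \<le> g x" "\<And>x. g x \<le> B"
    and "m \<le> n" "0 < s"
  defines "a \<equiv> \<integral>x. g x \<partial>M"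
  shows "\<exists>S \<in> sets (PiM {..<n} (\<lambda>_. M)).
           1 - real m * B * a / s\<^sup>2 \<le> measure (PiM {..<n} (\<lambda>_. M)) S \<and>
           (\<forall>\<omega>\<in>S. valid_input (map \<omega> [0..<n]) \<and> (\<Sum>i<m. g (\<omega> i)) < real m * a + s)"
proof -
  define Q where "Q = PiM {..<n} (\<lambda>_. M)"
  interpret Q: prob_space Q unfolding Q_def by (rule prob_space_PiM) (rule M)
  have g_measurable_M [measurable]: "g \<in> borel_measurable M"
    using g_measurable measurable_cong_sets[OF sets_M refl] by blast
  have [measurable]: "(\<lambda>\<omega>. \<omega> i) \<in> borel_measurable Q" if "i \<in> {..<n}" for i
    using measurable_component_singleton[OF that, of "\<lambda>_. M"] measurable_cong_sets[OF refl sets_M]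
    unfolding Q_def by blast
  have [measurable]: "(\<lambda>\<omega>. \<Sum>i<m. g (\<omega> i)) \<in> borel_measurable Q"
    unfolding Q_def using \<open>m \<le> n\<close> g_measurable_M
    by (intro borel_measurable_sum measurable_compose[OF measurable_component_singleton]) auto
  define dev where "dev \<omega> = \<bar>(\<Sum>i<m. g (\<omega> i)) - real m * a\<bar>" for \<omega>
  have [measurable]: "dev \<in> borel_measurable Q"
    unfolding dev_def by measurable
  define S where "S = {\<omega> \<in> space Q. dev \<omega> < s \<and> (\<forall>i\<in>{..<n}. \<omega> i \<in> {0<..1})}"
  have S_sets: "S \<in> sets Q"
    unfolding S_def by measurable
  have "AE \<omega> in Q. \<forall>i\<in>{..<n}. \<omega> i \<in> {0<..1}"
    unfolding Q_def by (rule AE_PiM_components_in_unit_interval[OF M sets_M assms(3) finite_lessThan])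
  then have "Q.prob S = Q.prob (space Q - {\<omega> \<in> space Q. s \<le> dev \<omega>})"
  proof (rule measure_eq_AE[OF eventually_mono])
    show "\<omega> \<in> S \<longleftrightarrow> \<omega> \<in> space Q - {\<omega> \<in> space Q. s \<le> dev \<omega>}"
      if "\<forall>i\<in>{..<n}. \<omega> i \<in> {0<..1}" for \<omega>
      using that by (auto simp: S_def)
  qed (fact S_sets, measurable)
  also have "\<dots> = 1 - Q.prob {\<omega> \<in> space Q. s \<le> dev \<omega>}"
    by (rule Q.prob_compl) measurable
  finally have "1 - real m * B * a / s\<^sup>2 \<le> Q.prob S"
    using prob_PiM_sum_components_deviation[OF M g_measurable_M assms(5,6) \<open>m \<le> n\<close> \<open>0 < s\<close>]
    unfolding Q_def dev_def a_def by simp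
  moreover have "valid_input (map \<omega> [0..<n]) \<and> (\<Sum>i<m. g (\<omega> i)) < real m * a + s" if "\<omega> \<in> S" for \<omega>
    using that unfolding S_def dev_def valid_input_def by auto
  ultimately show ?thesis
    using S_sets unfolding Q_def by blast
qed

lemma nat_floor_mult_le:
  assumes "0 \<le> \<beta>" "\<beta> \<le> 1"
  shows "nat \<lfloor>\<beta> * real n\<rfloor> \<le> n"
proof -
  have "real (nat \<lfloor>\<beta> * real n\<rfloor>) \<le> \<beta> * real n"
    using assms by simp
  also have "\<dots> \<le> real n"
    using assms by (simp add: mult_left_le_one_le)
  finally show ?thesis by simp
qed

lemma prefix_weight_less_with_high_prob:
  fixes M :: "real measure" and n :: nat
  assumes "0 < \<delta>" "\<delta> < 1" "0 \<le> \<beta>" "\<beta> \<le> 1" "1 \<le> \<nu>" "0 < \<epsilon>"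
    and M: "prob_space M" "sets M = sets borel" "measure M {0<..1} = 1"
  defines "c \<equiv> \<nu> / (\<delta> * (1 - \<delta>))"
    and "E \<equiv> \<integral>\<omega>. real (Opt (map \<omega> [0..<n])) \<partial>PiM {..<n} (\<lambda>_. M)"
  assumes "0 < E" and E_large: "4 * (1 / (1 - \<delta>) + \<nu>) * c / \<epsilon> ^ 3 \<le> E"
  shows "\<exists>S \<in> sets (PiM {..<n} (\<lambda>_. M)). 1 - \<epsilon> \<le> measure (PiM {..<n} (\<lambda>_. M)) S \<and>
           (\<forall>\<omega>\<in>S. valid_input (map \<omega> [0..<n]) \<and>
              (\<Sum>i<nat \<lfloor>\<beta> * real n\<rfloor>. item_weight \<delta> \<nu> (\<omega> i)) < \<beta> * c * E + \<epsilon> * E / 2)"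
proof -
  define B where "B = 1 / (1 - \<delta>) + \<nu>"
  define m where "m = nat \<lfloor>\<beta> * real n\<rfloor>"
  define a where "a = \<integral>x. item_weight \<delta> \<nu> x \<partial>M"
  define s where "s = \<epsilon> * E / 2"
  have m_le: "real m \<le> \<beta> * real n" "m \<le> n"
    using assms nat_floor_mult_le by (simp_all add: m_def)
  have "integrable (PiM {..<n} (\<lambda>_. M)) (\<lambda>\<omega>. real (Opt (map \<omega> [0..<n])))"
    using \<open>0 < E\<close> not_integrable_integral_eq unfolding E_def by fastforce
  then have "real n * a \<le> c * E"
    unfolding a_def c_def E_def using assms by (intro expected_weight_le_expected_Opt M) auto
  moreover have "0 \<le> a"
    unfolding a_def using assms item_weight_nonneg by simp
  ultimately have "real m * a \<le> \<beta> * real n * a" "\<beta> * (real n * a) \<le> \<beta> * (c * E)"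
    using m_le \<open>0 \<le> \<beta>\<close> by (simp_all add: mult_right_mono mult_left_mono)
  then have mean: "real m * a \<le> \<beta> * c * E"
    by (simp add: mult.assoc)
  also have "\<dots> \<le> c * E"
    using mult_left_le_one_le[of "c * E" \<beta>] assms \<open>0 < E\<close> by (simp add: c_def mult.assoc)
  finally have "B * (real m * a) \<le> B * (c * E)"
    using \<open>\<delta> < 1\<close> \<open>1 \<le> \<nu>\<close> by (intro mult_left_mono) (simp_all add: B_def)
  then have "real m * B * a \<le> B * (c * E)"
    by (simp add: ac_simps)
  then have "real m * B * a / s\<^sup>2 \<le> B * (c * E) / s\<^sup>2"
    by (rule divide_right_mono) simp
  also have "\<dots> = 4 * B * c / (\<epsilon> ^ 2 * E)"
    using \<open>0 < E\<close> \<open>0 < \<epsilon>\<close> by (simp add: s_def field_simps power2_eq_square)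
  also have "\<dots> \<le> \<epsilon>"
    using E_large \<open>0 < E\<close> \<open>0 < \<epsilon>\<close> by (simp add: B_def field_simps power3_eq_cube power2_eq_square)
  finally have chebyshev_bound: "real m * B * a / s\<^sup>2 \<le> \<epsilon>" .
  have "0 \<le> \<nu>" "0 < s"
    using assms \<open>0 < E\<close> by (auto simp: s_def)
  then obtain S where S: "S \<in> sets (PiM {..<n} (\<lambda>_. M))"
      "1 - real m * B * a / s\<^sup>2 \<le> measure (PiM {..<n} (\<lambda>_. M)) S"
      "\<forall>\<omega>\<in>S. valid_input (map \<omega> [0..<n]) \<and> (\<Sum>i<m. item_weight \<delta> \<nu> (\<omega> i)) < real m * a + s"
    using sum_components_less_with_high_prob[OF M item_weight_measurable[of \<delta> \<nu>]
        item_weight_nonneg item_weight_le \<open>m \<le> n\<close>] \<open>\<delta> < 1\<close>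
    unfolding a_def B_def by blast
  then show ?thesis
    using chebyshev_bound mean unfolding m_def s_def by (intro bexI[of _ S]) force+
qed

lemma num_bins_prefix_le_with_high_prob:
  fixes M :: "real measure" and A :: online_alg and n :: nat
  assumes "0 < \<delta>" "\<delta> < 1" "0 < \<beta>" "\<beta> \<le> 1" "0 \<le> \<mu>" "1 \<le> \<nu>" "0 < \<epsilon>"
    and cond_i: "\<And>L. valid_input L \<Longrightarrow>
           real (card {b \<in> small_only_bins \<delta> A L. bin_load A L b < 1 - \<delta>}) \<le> \<mu>"
    and cond_ii: "\<And>L. valid_input L \<Longrightarrow>
           real (card (large_bins \<delta> A L)) \<le> \<nu> * real (num_large \<delta> L)"
    and M: "prob_space M" "sets M = sets borel" "measure M {0<..1} = 1"
  defines "E \<equiv> \<integral>\<omega>. real (Opt (map \<omega> [0..<n])) \<partial>PiM {..<n} (\<lambda>_. M)"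
  assumes E_large: "4 * (1 / (1 - \<delta>) + \<nu>) * (\<nu> / (\<delta> * (1 - \<delta>))) / \<epsilon> ^ 3 + 2 * \<mu> / \<epsilon> < E"
  shows "\<exists>S \<in> sets (PiM {..<n} (\<lambda>_. M)). measure (PiM {..<n} (\<lambda>_. M)) S \<ge> 1 - \<epsilon> \<and>
           (\<forall>\<omega>\<in>S. real (num_bins A (map \<omega> [0..<nat \<lfloor>\<beta> * real n\<rfloor>]))
              \<le> (2 * \<beta> * \<nu> / (\<delta> * (1 - \<delta>)) + \<epsilon>) * E)"
proof -
  define c where "c = \<nu> / (\<delta> * (1 - \<delta>))"
  define m where "m = nat \<lfloor>\<beta> * real n\<rfloor>"
  have "0 \<le> 4 * (1 / (1 - \<delta>) + \<nu>) * c / \<epsilon> ^ 3" "0 \<le> 2 * \<mu> / \<epsilon>"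
    using assms by (auto simp: c_def)
  with E_large have E_ge: "4 * (1 / (1 - \<delta>) + \<nu>) * c / \<epsilon> ^ 3 \<le> E" "2 * \<mu> / \<epsilon> \<le> E" "0 < E"
    unfolding c_def by linarith+
  then have "\<mu> \<le> \<epsilon> * E / 2" and "0 \<le> \<beta> * c * E"
    using assms by (simp_all add: pos_divide_le_eq mult.commute c_def)
  obtain S where S: "S \<in> sets (PiM {..<n} (\<lambda>_. M))" "1 - \<epsilon> \<le> measure (PiM {..<n} (\<lambda>_. M)) S"
      "\<And>\<omega>. \<omega> \<in> S \<Longrightarrow> valid_input (map \<omega> [0..<n]) \<and>
              (\<Sum>i<m. item_weight \<delta> \<nu> (\<omega> i)) < \<beta> * c * E + \<epsilon> * E / 2"
    using prefix_weight_less_with_high_prob[OF assms(1,2) _ assms(4,6,7) M] E_ge \<open>0 < \<beta>\<close>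
    unfolding c_def m_def E_def by fastforce
  have "real (num_bins A (map \<omega> [0..<m])) \<le> (2 * \<beta> * c + \<epsilon>) * E" if "\<omega> \<in> S" for \<omega>
  proof -
    have "m \<le> n"
      using assms nat_floor_mult_le by (simp add: m_def)
    then have valid: "valid_input (map \<omega> [0..<m])"
      using S(3)[OF that] by (auto simp: valid_input_def)
    have "real (num_bins A (map \<omega> [0..<m])) \<le> \<mu> + (\<Sum>i<m. item_weight \<delta> \<nu> (\<omega> i))"
      using num_bins_le_sum_item_weight[OF valid \<open>\<delta> < 1\<close> cond_i[OF valid] cond_ii[OF valid]]
      by (simp add: sum_list_sum_nth atLeast0LessThan)
    also have "\<dots> \<le> (2 * \<beta> * c + \<epsilon>) * E"
      using S(3)[OF that] \<open>\<mu> \<le> \<epsilon> * E / 2\<close> \<open>0 \<le> \<beta> * c * E\<close> by (simp add: algebra_simps)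
    finally show ?thesis .
  qed
  then show ?thesis
    using S(1,2) unfolding m_def c_def by (auto simp: mult.assoc)
qed

theorem lemmaC1:
  fixes \<delta> \<beta> \<mu> \<nu> :: real and A :: online_alg
  assumes "0 < \<delta>" "\<delta> < 1/2" "0 < \<beta>" "\<beta> \<le> 1" "0 \<le> \<mu>" "1 \<le> \<nu>"
    and "valid_online_alg A"
    and cond_i: "\<And>L. valid_input L \<Longrightarrow>
           real (card {b \<in> small_only_bins \<delta> A L. bin_load A L b < 1 - \<delta>}) \<le> \<mu>"
    and cond_ii: "\<And>L. valid_input L \<Longrightarrow>
           real (card (large_bins \<delta> A L)) \<le> \<nu> * real (num_large \<delta> L)"
  shows "\<forall>\<epsilon>>0. \<exists>K. \<forall>(M :: real measure) (n :: nat).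
           prob_space M \<and> sets M = sets borel \<and> measure M {0<..1} = 1 \<and>
           (\<integral>\<omega>. real (Opt (map \<omega> [0..<n])) \<partial>(PiM {..<n} (\<lambda>_. M))) \<ge> K \<longrightarrow>
           (\<exists>S \<in> sets (PiM {..<n} (\<lambda>_. M)).
              measure (PiM {..<n} (\<lambda>_. M)) S \<ge> 1 - \<epsilon> \<and>
              (\<forall>\<omega>\<in>S. real (num_bins A (map \<omega> [0..<nat \<lfloor>\<beta> * real n\<rfloor>]))
                 \<le> (2 * \<beta> * \<nu> / (\<delta> * (1 - \<delta>)) + \<epsilon>) *
                   (\<integral>\<omega>. real (Opt (map \<omega> [0..<n])) \<partial>(PiM {..<n} (\<lambda>_. M)))))"
proof (intro allI impI)
  fix \<epsilon> :: real
  assume "0 < \<epsilon>"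
  have "\<delta> < 1" using \<open>\<delta> < 1/2\<close> by simp
  show "\<exists>K. \<forall>(M :: real measure) (n :: nat).
           prob_space M \<and> sets M = sets borel \<and> measure M {0<..1} = 1 \<and>
           (\<integral>\<omega>. real (Opt (map \<omega> [0..<n])) \<partial>(PiM {..<n} (\<lambda>_. M))) \<ge> K \<longrightarrow>
           (\<exists>S \<in> sets (PiM {..<n} (\<lambda>_. M)).
              measure (PiM {..<n} (\<lambda>_. M)) S \<ge> 1 - \<epsilon> \<and>
              (\<forall>\<omega>\<in>S. real (num_bins A (map \<omega> [0..<nat \<lfloor>\<beta> * real n\<rfloor>]))
                 \<le> (2 * \<beta> * \<nu> / (\<delta> * (1 - \<delta>)) + \<epsilon>) *
                   (\<integral>\<omega>. real (Opt (map \<omega> [0..<n])) \<partial>(PiM {..<n} (\<lambda>_. M)))))"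
    using num_bins_prefix_le_with_high_prob[OF assms(1) \<open>\<delta> < 1\<close> assms(3-6) \<open>0 < \<epsilon>\<close> cond_i cond_ii]
    by (intro exI[of _ "4 * (1 / (1 - \<delta>) + \<nu>) * (\<nu> / (\<delta> * (1 - \<delta>))) / \<epsilon> ^ 3 + 2 * \<mu> / \<epsilon> + 1"])
       auto
qed

end
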